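(* With notation as below, the chain map $\Phi:\mathbb{G}\to\mathbb{F}$ is not a morphism of dg algebras, but for all $g_1,g_2\in\mathbb{G}$ one has $z\,\Phi(g_1g_2)=\Phi(g_1)\Phi(g_2)$, where products are taken with respect to Gemeda's dg algebra structures on the Taylor resolutions $\mathbb{G}$ and $\mathbb{F}$.
   Context: Let $n\ge1$, $a_1,\ldots,a_n\ge0$, $Q=\Bbbk[z,x_1,\ldots,x_n,y_{i,j}\ (1\le i\le n,1\le j\le a_i)]$, $I=(zx_1,\ldots,zx_n)$, $J=(x_iy_{i,j})$. Order $G(I)$ by $zx_i<zx_j$ iff $i<j$ and $G(J)$ by $x_iy_{i,\ell}<x_jy_{j,p}$ iff $i<j$, or $i=j$ and $\ell<p$. For an ordered generating set and a subset $U$, $m_U=\mathrm{lcm}(U)$. $\mathbb{F}$ (basis $f_V$, $V\subseteq G(I)$) and $\mathbb{G}$ (basis $g_W$, $W\subseteq G(J)$) are the Taylor resolutions of $Q/I$, $Q/J$, with differential $\partial(e_U)=\sum_{u\in U}(-1)^{|\{v\in U:v<u\}|}\frac{m_U}{m_{U\setminus\{u\}}}e_{U\setminus\{u\}}$ and Gemeda product $e_Ve_W=(-1)^{|\{(v,w)\in V\times W:v>w\}|}\frac{m_Vm_W}{m_{V\cup W}}e_{V\cup W}$ if $V\cap W=\emptyset$, and $0$ otherwise. For $W\subseteq G(J)$, $W_z$ is the multiset $\{zx_i:x_iy_{i,j}\in W\}$ ordered as $W$, and $y_W=\mathrm{lcm}\{y_{i,j}:x_iy_{i,j}\in W\}$.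 $\Phi$ is the $Q$-linear map with $\Phi(1)=z$ and $\Phi(g_W)=y_Wf_{W_z}$ for $W\neq\emptyset$, where $f_{W_z}:=0$ if $W_z$ has a repeated element. *)

theory Defs
  imports "HOL-Library.Poly_Mapping"
begin

text \<open>Variables of the polynomial ring Q = k[z, x_1..x_n, y_(i,j)].\<close>
datatype var = Z | X nat | Y nat nat

text \<open>Monomials are exponent vectors; polynomials in Q are finitely supported
  maps from monomials to coefficients in the field k.\<close>
type_synonym monom = "var \<Rightarrow>\<^sub>0 nat"
type_synonym 'k qpoly = "monom \<Rightarrow>\<^sub>0 'k"

definition mpoly :: "monom \<Rightarrow> 'k::comm_ring_1 qpoly" where
  "mpoly m = Poly_Mapping.single m 1"

definition varm :: "var \<Rightarrow> monom" where
  "varm v = Poly_Mapping.single v 1"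

definition mlcm :: "('g \<Rightarrow> monom) \<Rightarrow> 'g set \<Rightarrow> monom" where
  "mlcm mon U = Abs_poly_mapping (\<lambda>v. if U = {} then 0 else Max ((\<lambda>u. Poly_Mapping.lookup (mon u) v) ` U))"

text \<open>Elements of a Taylor resolution: finitely supported Q-combinations of basis
  elements e_U (U a subset of the generators).\<close>
type_synonym ('g,'k) tay = "'g set \<Rightarrow>\<^sub>0 'k qpoly"

definition gemeda_basis ::
  "('g \<Rightarrow> 'g \<Rightarrow> bool) \<Rightarrow> ('g \<Rightarrow> monom) \<Rightarrow> 'g set \<Rightarrow> 'g set \<Rightarrow> ('g,'k::comm_ring_1) tay" where
  "gemeda_basis lt mon V W =
     (if V \<inter> W = {} then
        Poly_Mapping.single (V \<union> W)
          ((- 1) ^ card {(v, w). v \<in> V \<and> w \<in> W \<and> lt w v}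
            * mpoly (mlcm mon V + mlcm mon W - mlcm mon (V \<union> W)))
      else 0)"

definition gemeda_mult ::
  "('g \<Rightarrow> 'g \<Rightarrow> bool) \<Rightarrow> ('g \<Rightarrow> monom) \<Rightarrow> ('g,'k::comm_ring_1) tay \<Rightarrow> ('g,'k) tay \<Rightarrow> ('g,'k) tay" where
  "gemeda_mult lt mon a b =
     (\<Sum>V\<in>Poly_Mapping.keys a. \<Sum>W\<in>Poly_Mapping.keys b.
        Poly_Mapping.map (\<lambda>c. Poly_Mapping.lookup a V * Poly_Mapping.lookup b W * c) (gemeda_basis lt mon V W))"

text \<open>Generators of I: zx_i, indexed by i; of J: x_i y_(i,j), indexed by (i,j).\<close>
definition genI :: "nat \<Rightarrow> nat set" where
  "genI n = {1..n}"

definition genJ :: "nat \<Rightarrow> (nat \<Rightarrow> nat) \<Rightarrow> (nat \<times> nat) set" where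
  "genJ n a = {(i, j). 1 \<le> i \<and> i \<le> n \<and> 1 \<le> j \<and> j \<le> a i}"

definition monI :: "nat \<Rightarrow> monom" where
  "monI i = varm Z + varm (X i)"

definition monJ :: "nat \<times> nat \<Rightarrow> monom" where
  "monJ p = varm (X (fst p)) + varm (Y (fst p) (snd p))"

definition ltI :: "nat \<Rightarrow> nat \<Rightarrow> bool" where
  "ltI i j = (i < j)"

definition ltJ :: "nat \<times> nat \<Rightarrow> nat \<times> nat \<Rightarrow> bool" where
  "ltJ p q = (fst p < fst q \<or> (fst p = fst q \<and> snd p < snd q))"

definition multF :: "(nat,'k::comm_ring_1) tay \<Rightarrow> (nat,'k) tay \<Rightarrow> (nat,'k) tay" where
  "multF = gemeda_mult ltI monI"

definition multG :: "(nat \<times> nat,'k::comm_ring_1) tay \<Rightarrow> (nat \<times> nat,'k) tay \<Rightarrow> (nat \<times> nat,'k) tay" where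
  "multG = gemeda_mult ltJ monJ"

definition yW :: "(nat \<times> nat) set \<Rightarrow> monom" where
  "yW W = (\<Sum>p\<in>W. varm (Y (fst p) (snd p)))"

text \<open>The map Phi on basis elements: Phi(g_empty) = z f_empty, Phi(g_W) = y_W f_(W_z),
  where f_(W_z) = 0 if W_z has a repeated element. If there is no repetition,
  W_z ordered as W is increasing (order on J refines order by i), so no sign.\<close>
definition Phi_basis :: "(nat \<times> nat) set \<Rightarrow> (nat,'k::comm_ring_1) tay" where
  "Phi_basis W =
     (if W = {} then Poly_Mapping.single {} (mpoly (varm Z))
      else if inj_on fst W then Poly_Mapping.single (fst ` W) (mpoly (yW W))
      else 0)"

definition Phi :: "(nat \<times> nat,'k::comm_ring_1) tay \<Rightarrow> (nat,'k) tay" where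
  "Phi b = (\<Sum>W\<in>Poly_Mapping.keys b. Poly_Mapping.map (\<lambda>c. Poly_Mapping.lookup b W * c) (Phi_basis W))"

definition elemsG :: "nat \<Rightarrow> (nat \<Rightarrow> nat) \<Rightarrow> (nat \<times> nat,'k::comm_ring_1) tay set" where
  "elemsG n a = {b. \<forall>W\<in>Poly_Mapping.keys b. W \<subseteq> genJ n a}"

end

theory Submission
  imports Defs
begin

text \<open>Both Gemeda products are bilinear and \<open>\<Phi>\<close> is linear, so it suffices to compare
  \<open>z \<Phi>(g\<^sub>V g\<^sub>W)\<close> with \<open>\<Phi>(g\<^sub>V) \<Phi>(g\<^sub>W)\<close> for basis elements. All generators are
  squarefree, so every lcm is the product of a union of variables. If \<open>V\<close> and \<open>W\<close> are
  disjoint and no index \<open>i\<close> occurs twice in \<open>V \<union> W\<close>, then \<open>m\<^sub>V m\<^sub>W = lcm(m\<^sub>V, m\<^sub>W)\<close> in G,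
  whereas in F the common factor \<open>z\<close> of all generators survives as
  \<open>m\<^sub>V m\<^sub>W / lcm(m\<^sub>V, m\<^sub>W) = z\<close>; the signs agree because \<open>(i, j) \<mapsto> i\<close> maps the inversions
  of \<open>V \<times> W\<close> bijectively onto those of \<open>V\<^sub>z \<times> W\<^sub>z\<close>. In all other cases both sides
  vanish. The same factor \<open>z\<close> shows that \<open>\<Phi>\<close> is not multiplicative:
  \<open>\<Phi>(1 \<cdot> 1) = z\<close> but \<open>\<Phi>(1) \<Phi>(1) = z\<^sup>2\<close>.\<close>

text \<open>\<open>pm_cmul\<close> and \<open>pm_extend\<close> generalise \<open>frag_cmul\<close> and \<open>frag_extend\<close> of
  \<^theory>\<open>HOL-Library.Poly_Mapping\<close> from integer to arbitrary commutative coefficients.\<close>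

definition pm_cmul :: "'b::comm_ring_1 \<Rightarrow> ('a \<Rightarrow>\<^sub>0 'b) \<Rightarrow> 'a \<Rightarrow>\<^sub>0 'b" where
  "pm_cmul c x = Poly_Mapping.map ((*) c) x"

definition pm_extend :: "('a \<Rightarrow> 'c \<Rightarrow>\<^sub>0 'b::comm_ring_1) \<Rightarrow> ('a \<Rightarrow>\<^sub>0 'b) \<Rightarrow> 'c \<Rightarrow>\<^sub>0 'b" where
  "pm_extend f x = (\<Sum>k\<in>Poly_Mapping.keys x. pm_cmul (Poly_Mapping.lookup x k) (f k))"

lemma lookup_pm_cmul [simp]: "Poly_Mapping.lookup (pm_cmul c x) k = c * Poly_Mapping.lookup x k"
  by (simp add: pm_cmul_def Poly_Mapping.map.rep_eq when_def)

lemma pm_cmul_zero [simp]: "pm_cmul c 0 = 0"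
  by (rule poly_mapping_eqI) simp

lemma pm_cmul_zero_left [simp]: "pm_cmul 0 x = 0"
  by (rule poly_mapping_eqI) simp

lemma pm_cmul_cmul [simp]: "pm_cmul c (pm_cmul d x) = pm_cmul (c * d) x"
  by (rule poly_mapping_eqI) (simp add: mult.assoc)

lemma pm_cmul_single [simp]: "pm_cmul c (Poly_Mapping.single k d) = Poly_Mapping.single k (c * d)"
  by (rule poly_mapping_eqI) (simp add: lookup_single when_def)

lemma pm_cmul_distrib: "pm_cmul (c + d) x = pm_cmul c x + pm_cmul d x"
  by (rule poly_mapping_eqI) (simp add: lookup_add distrib_right)

lemma pm_cmul_sum: "pm_cmul c (sum f A) = (\<Sum>a\<in>A. pm_cmul c (f a))"
  by (rule poly_mapping_eqI) (simp add: lookup_sum sum_distrib_left)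

lemma pm_extend_superset:
  assumes "finite S" "Poly_Mapping.keys x \<subseteq> S"
  shows "pm_extend f x = (\<Sum>k\<in>S. pm_cmul (Poly_Mapping.lookup x k) (f k))"
  unfolding pm_extend_def
  by (rule sum.mono_neutral_left) (use assms in \<open>auto simp: in_keys_iff\<close>)

lemma pm_extend_0 [simp]: "pm_extend f 0 = 0"
  by (simp add: pm_extend_def)

lemma pm_extend_single [simp]: "pm_extend f (Poly_Mapping.single k c) = pm_cmul c (f k)"
  by (subst pm_extend_superset[of "{k}"]) auto

lemma pm_extend_add: "pm_extend f (x + y) = pm_extend f x + pm_extend f y"
proof -
  let ?S = "Poly_Mapping.keys x \<union> Poly_Mapping.keys y"
  have "pm_extend f (x + y) = (\<Sum>k\<in>?S. pm_cmul (Poly_Mapping.lookup (x + y) k) (f k))"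
    by (rule pm_extend_superset) (simp_all add: keys_add)
  also have "\<dots> = pm_extend f x + pm_extend f y"
    by (simp add: pm_extend_superset[of ?S x] pm_extend_superset[of ?S y]
        lookup_add pm_cmul_distrib sum.distrib)
  finally show ?thesis .
qed

lemma pm_extend_cmul: "pm_extend f (pm_cmul c x) = pm_cmul c (pm_extend f x)"
proof -
  have "Poly_Mapping.keys (pm_cmul c x) \<subseteq> Poly_Mapping.keys x"
    by (auto simp: in_keys_iff)
  then have "pm_extend f (pm_cmul c x)
      = (\<Sum>k\<in>Poly_Mapping.keys x. pm_cmul (Poly_Mapping.lookup (pm_cmul c x) k) (f k))"
    by (simp only: pm_extend_superset finite_keys)
  then show ?thesis
    by (simp add: pm_extend_def pm_cmul_sum)
qed

lemma pm_extend_sum: "pm_extend f (sum g A) = (\<Sum>a\<in>A. pm_extend f (g a))"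
  by (induction A rule: infinite_finite_induct) (simp_all add: pm_extend_add)

lemma pm_extend_cong:
  "(\<And>k. k \<in> Poly_Mapping.keys x \<Longrightarrow> f k = g k) \<Longrightarrow> pm_extend f x = pm_extend g x"
  by (simp add: pm_extend_def)

lemma pm_cmul_pm_extend: "pm_cmul c (pm_extend f x) = pm_extend (\<lambda>k. pm_cmul c (f k)) x"
  by (simp add: pm_extend_def pm_cmul_sum mult.commute)

lemma pm_extend_pm_extend:
  "pm_extend g (pm_extend f x) = pm_extend (\<lambda>k. pm_extend g (f k)) x"
  unfolding pm_extend_def[of f x] pm_extend_def[of "\<lambda>k. pm_extend g (f k)" x]
  by (simp add: pm_extend_sum pm_extend_cmul)

lemma pm_extend_swap:
  "pm_extend (\<lambda>k. pm_extend (f k) y) x = pm_extend (\<lambda>l. pm_extend (\<lambda>k. f k l) x) y"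
  by (simp add: pm_extend_def pm_cmul_sum mult.commute sum.swap[of _ "Poly_Mapping.keys x"])

lemma gemeda_mult_eq_pm_extend:
  "gemeda_mult lt mon a b = pm_extend (\<lambda>V. pm_extend (gemeda_basis lt mon V) b) a"
  unfolding gemeda_mult_def pm_extend_def pm_cmul_sum pm_cmul_cmul
  unfolding pm_cmul_def ..

lemma gemeda_mult_pm_extend:
  "gemeda_mult lt mon (pm_extend f x) (pm_extend g y)
     = pm_extend (\<lambda>V. pm_extend (\<lambda>W. gemeda_mult lt mon (f V) (g W)) y) x"
proof -
  let ?B = "gemeda_basis lt mon"
  have "gemeda_mult lt mon (pm_extend f x) (pm_extend g y)
      = pm_extend (\<lambda>V. pm_extend (\<lambda>U. pm_extend (\<lambda>W. pm_extend (?B U) (g W)) y) (f V)) x"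
    by (simp add: gemeda_mult_eq_pm_extend pm_extend_pm_extend)
  also have "\<dots> = pm_extend (\<lambda>V. pm_extend (\<lambda>W. pm_extend (\<lambda>U. pm_extend (?B U) (g W)) (f V)) y) x"
    by (simp only: pm_extend_swap[of _ y])
  also have "\<dots> = pm_extend (\<lambda>V. pm_extend (\<lambda>W. gemeda_mult lt mon (f V) (g W)) y) x"
    by (simp only: gemeda_mult_eq_pm_extend)
  finally show ?thesis .
qed

lemma Phi_eq_pm_extend: "Phi = pm_extend Phi_basis"
  by (simp add: fun_eq_iff Phi_def pm_extend_def pm_cmul_def)

definition monom_of_set :: "var set \<Rightarrow> monom" where
  "monom_of_set A = Abs_poly_mapping (\<lambda>v. if v \<in> A then 1 else 0)"

lemma lookup_monom_of_set:
  "finite A \<Longrightarrow> Poly_Mapping.lookup (monom_of_set A) v = (if v \<in> A then 1 else 0)"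
  unfolding monom_of_set_def by (subst lookup_Abs_poly_mapping) (auto intro: finite_subset)

lemma monom_of_set_empty [simp]: "monom_of_set {} = 0"
  by (simp add: monom_of_set_def)

lemma varm_eq_monom_of_set: "varm v = monom_of_set {v}"
  by (rule poly_mapping_eqI) (simp add: lookup_monom_of_set varm_def lookup_single when_def)

lemma monom_of_set_Un:
  "finite A \<Longrightarrow> finite B \<Longrightarrow> A \<inter> B = {} \<Longrightarrow> monom_of_set (A \<union> B) = monom_of_set A + monom_of_set B"
  by (rule poly_mapping_eqI) (auto simp: lookup_monom_of_set lookup_add)

lemma monom_of_set_add_diff_Un:
  "finite A \<Longrightarrow> finite B \<Longrightarrow> monom_of_set A + monom_of_set B - monom_of_set (A \<union> B) = monom_of_set (A \<inter> B)"
  by (rule poly_mapping_eqI) (auto simp: lookup_monom_of_set lookup_add lookup_minus)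

lemma mlcm_monom_of_set:
  assumes "finite U" and "\<And>u. u \<in> U \<Longrightarrow> finite (vs u) \<and> mon u = monom_of_set (vs u)"
  shows "mlcm mon U = monom_of_set (\<Union>u\<in>U. vs u)"
proof -
  have "Max ((\<lambda>u. Poly_Mapping.lookup (mon u) v) ` U) = (if v \<in> (\<Union>u\<in>U. vs u) then 1 else 0)"
    if "U \<noteq> {}" for v
  proof -
    have "(\<lambda>u. Poly_Mapping.lookup (mon u) v) ` U = (\<lambda>u. if v \<in> vs u then 1 else 0) ` U"
      using assms by (auto simp: lookup_monom_of_set)
    then show ?thesis
      using assms(1) that by (auto intro!: Max_eqI)
  qed
  then show ?thesis
    unfolding mlcm_def monom_of_set_def by (cases "U = {}") simp_all
qed

lemma mpoly_add: "mpoly (m + m') = (mpoly m * mpoly m' :: 'k::comm_ring_1 qpoly)"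
  by (simp add: mpoly_def mult_single)

lemma mpoly_0 [simp]: "mpoly 0 = 1"
  by (simp add: mpoly_def)

lemma gemeda_basis_empty_left:
  "finite W \<Longrightarrow> (gemeda_basis lt mon {} W :: ('g,'k::comm_ring_1) tay) = Poly_Mapping.single W 1"
  by (simp add: gemeda_basis_def mlcm_def)

lemma gemeda_basis_empty_right:
  "(gemeda_basis lt mon V {} :: ('g,'k::comm_ring_1) tay) = Poly_Mapping.single V 1"
  by (simp add: gemeda_basis_def mlcm_def)

definition varsJ :: "(nat \<times> nat) set \<Rightarrow> var set" where
  "varsJ W = (\<Union>(i, j)\<in>W. {X i, Y i j})"

definition varsI :: "nat set \<Rightarrow> var set" where
  "varsI U = (\<Union>i\<in>U. {Z, X i})"

lemma finite_varsJ: "finite W \<Longrightarrow> finite (varsJ W)"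
  by (auto simp: varsJ_def)

lemma finite_varsI: "finite U \<Longrightarrow> finite (varsI U)"
  by (simp add: varsI_def)

lemma varsJ_Un: "varsJ (V \<union> W) = varsJ V \<union> varsJ W"
  by (simp add: varsJ_def)

lemma varsI_Un: "varsI (U \<union> U') = varsI U \<union> varsI U'"
  by (simp add: varsI_def)

lemma mlcm_monJ: "finite W \<Longrightarrow> mlcm monJ W = monom_of_set (varsJ W)"
  unfolding varsJ_def split_beta
  by (rule mlcm_monom_of_set)
     (auto simp: monJ_def varm_eq_monom_of_set monom_of_set_Un[symmetric] insert_commute)

lemma mlcm_monI: "finite U \<Longrightarrow> mlcm monI U = monom_of_set (varsI U)"
  unfolding varsI_def
  by (rule mlcm_monom_of_set)
     (auto simp: monI_def varm_eq_monom_of_set monom_of_set_Un[symmetric] insert_commute)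

lemma gemeda_basis_J_disjoint:
  assumes "finite V" "finite W" "V \<inter> W = {}" "fst ` V \<inter> fst ` W = {}"
  shows "gemeda_basis ltJ monJ V W
    = Poly_Mapping.single (V \<union> W) ((- 1) ^ card {(v, w). v \<in> V \<and> w \<in> W \<and> ltJ w v} :: 'k::comm_ring_1 qpoly)"
proof -
  have "varsJ V \<inter> varsJ W = {}"
  proof (intro equalityI subsetI)
    fix v assume "v \<in> varsJ V \<inter> varsJ W"
    then obtain p q where "p \<in> V" "q \<in> W" "v \<in> {X (fst p), Y (fst p) (snd p)}"
        "v \<in> {X (fst q), Y (fst q) (snd q)}"
      by (auto simp: varsJ_def split_beta)
    then show "v \<in> {}"
      using assms(3,4) by (auto simp: prod_eq_iff)
  qed simp
  then have "mlcm monJ V + mlcm monJ W - mlcm monJ (V \<union> W) = 0"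
    using assms(1,2) by (simp add: mlcm_monJ varsJ_Un monom_of_set_add_diff_Un finite_varsJ)
  then show ?thesis
    using assms(3) by (simp add: gemeda_basis_def)
qed

lemma gemeda_basis_I_disjoint:
  assumes "finite U" "finite U'" "U \<noteq> {}" "U' \<noteq> {}" "U \<inter> U' = {}"
  shows "gemeda_basis ltI monI U U'
    = Poly_Mapping.single (U \<union> U') ((- 1) ^ card {(i, j). i \<in> U \<and> j \<in> U' \<and> ltI j i} * mpoly (varm Z) :: 'k::comm_ring_1 qpoly)"
proof -
  have "varsI U \<inter> varsI U' = {Z}"
    using assms(3-5) by (auto simp: varsI_def)
  then have "mlcm monI U + mlcm monI U' - mlcm monI (U \<union> U') = varm Z"
    using assms(1,2)
    by (simp add: mlcm_monI varsI_Un monom_of_set_add_diff_Un finite_varsI varm_eq_monom_of_set)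
  then show ?thesis
    using assms(5) by (simp add: gemeda_basis_def)
qed

lemma card_inversions_fst:
  assumes "inj_on fst (V \<union> W)"
  shows "card {(i, j). i \<in> fst ` V \<and> j \<in> fst ` W \<and> ltI j i}
       = card {(v, w). v \<in> V \<and> w \<in> W \<and> ltJ w v}"
proof -
  let ?S = "{(v, w). v \<in> V \<and> w \<in> W \<and> ltJ w v}"
  have "inj_on (map_prod fst fst) (V \<times> W)"
    using assms by (intro map_prod_inj_on) (simp_all add: inj_on_Un)
  then have "inj_on (map_prod fst fst) ?S"
    by (rule inj_on_subset) auto
  moreover have "map_prod fst fst ` ?S = {(i, j). i \<in> fst ` V \<and> j \<in> fst ` W \<and> ltI j i}"
  proof (intro equalityI subsetI)
    fix x assume "x \<in> map_prod fst fst ` ?S"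
    then obtain v w where vw: "v \<in> V" "w \<in> W" "ltJ w v" "x = (fst v, fst w)"
      by auto
    have "v \<noteq> w"
      using vw(3) by (auto simp: ltJ_def)
    then have "fst v \<noteq> fst w"
      using inj_onD[OF assms, of v w] vw(1,2) by blast
    then show "x \<in> {(i, j). i \<in> fst ` V \<and> j \<in> fst ` W \<and> ltI j i}"
      using vw by (auto simp: ltJ_def ltI_def)
  next
    fix x assume "x \<in> {(i, j). i \<in> fst ` V \<and> j \<in> fst ` W \<and> ltI j i}"
    then obtain v w where "v \<in> V" "w \<in> W" "fst w < fst v" "x = (fst v, fst w)"
      by (auto simp: ltI_def)
    then show "x \<in> map_prod fst fst ` ?S"
      by (auto simp: ltJ_def intro!: image_eqI[of _ _ "(v, w)"])
  qed
  ultimately show ?thesis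
    using card_image by fastforce
qed

lemma Phi_single: "Phi (Poly_Mapping.single W c) = pm_cmul c (Phi_basis W)"
  by (simp add: Phi_eq_pm_extend)

lemma Phi_0: "Phi 0 = 0"
  by (simp add: Phi_eq_pm_extend)

lemma gemeda_mult_0_left [simp]: "gemeda_mult lt mon 0 b = 0"
  by (simp add: gemeda_mult_def)

lemma gemeda_mult_0_right [simp]: "gemeda_mult lt mon a 0 = 0"
  by (simp add: gemeda_mult_def)

lemma gemeda_mult_single:
  "gemeda_mult lt mon (Poly_Mapping.single V c) (Poly_Mapping.single W d)
     = pm_cmul (c * d) (gemeda_basis lt mon V W)"
  by (simp add: gemeda_mult_eq_pm_extend)

lemma yW_Un: "finite V \<Longrightarrow> finite W \<Longrightarrow> V \<inter> W = {} \<Longrightarrow> yW (V \<union> W) = yW V + yW W"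
  unfolding yW_def by (rule sum.union_disjoint)

lemma disjoint_inj_on_Un_iff:
  "V \<inter> W = {} \<and> inj_on f (V \<union> W) \<longleftrightarrow> inj_on f V \<and> inj_on f W \<and> f ` V \<inter> f ` W = {}"
  by (auto simp: inj_on_Un)

lemma Phi_gemeda_basis_compatible:
  assumes fin: "finite V" "finite W" and ne: "V \<noteq> {}" "W \<noteq> {}"
    and inj: "inj_on fst V" "inj_on fst W" and disj: "fst ` V \<inter> fst ` W = {}"
  shows "pm_cmul (mpoly (varm Z)) (Phi (gemeda_basis ltJ monJ V W))
       = gemeda_mult ltI monI (Phi_basis V) (Phi_basis W :: (nat, 'k::comm_ring_1) tay)"
proof -
  have "V \<inter> W = {}" and inj_Un: "inj_on fst (V \<union> W)"
    using disjoint_inj_on_Un_iff[of V W fst] inj disj by blast+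
  define s :: "'k qpoly" where "s = (- 1) ^ card {(v, w). v \<in> V \<and> w \<in> W \<and> ltJ w v}"
  have "gemeda_basis ltJ monJ V W = Poly_Mapping.single (V \<union> W) s"
    unfolding s_def using fin \<open>V \<inter> W = {}\<close> disj by (rule gemeda_basis_J_disjoint)
  moreover have "gemeda_basis ltI monI (fst ` V) (fst ` W)
      = Poly_Mapping.single (fst ` V \<union> fst ` W) (s * mpoly (varm Z))"
    unfolding s_def card_inversions_fst[OF inj_Un, symmetric]
    using fin ne disj by (intro gemeda_basis_I_disjoint) simp_all
  ultimately show ?thesis
    using ne inj inj_Un fin \<open>V \<inter> W = {}\<close>
    by (simp add: Phi_single Phi_basis_def gemeda_mult_single image_Un yW_Un mpoly_add algebra_simps)
qed

lemma Phi_gemeda_basis_incompatible: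
  assumes ne: "V \<noteq> {}" "W \<noteq> {}"
    and incompat: "\<not> (inj_on fst V \<and> inj_on fst W \<and> fst ` V \<inter> fst ` W = {})"
  shows "Phi (gemeda_basis ltJ monJ V W) = (0 :: (nat, 'k::comm_ring_1) tay)"
    and "gemeda_mult ltI monI (Phi_basis V) (Phi_basis W :: (nat, 'k) tay) = 0"
proof -
  have "V \<inter> W \<noteq> {} \<or> \<not> inj_on fst (V \<union> W)"
    using incompat disjoint_inj_on_Un_iff[of V W fst] by blast
  then show "Phi (gemeda_basis ltJ monJ V W) = (0 :: (nat, 'k) tay)"
  proof
    assume "\<not> inj_on fst (V \<union> W)"
    then have "Phi_basis (V \<union> W) = (0 :: (nat, 'k) tay)"
      using ne by (simp add: Phi_basis_def)
    then show ?thesis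
      by (simp add: gemeda_basis_def Phi_single Phi_0)
  qed (simp add: gemeda_basis_def Phi_0)
  show "gemeda_mult ltI monI (Phi_basis V) (Phi_basis W :: (nat, 'k) tay) = 0"
  proof (cases "inj_on fst V \<and> inj_on fst W")
    case True
    then have "gemeda_basis ltI monI (fst ` V) (fst ` W) = (0 :: (nat, 'k) tay)"
      using incompat by (simp add: gemeda_basis_def)
    with True ne show ?thesis
      by (simp add: Phi_basis_def gemeda_mult_single)
  next
    case False
    with ne show ?thesis
      by (auto simp: Phi_basis_def)
  qed
qed

lemma Phi_gemeda_basis:
  assumes "finite V" "finite W"
  shows "pm_cmul (mpoly (varm Z)) (Phi (gemeda_basis ltJ monJ V W))
       = gemeda_mult ltI monI (Phi_basis V) (Phi_basis W :: (nat, 'k::comm_ring_1) tay)"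
proof (cases "V = {} \<or> W = {}")
  case True
  with assms show ?thesis
    by (auto simp: gemeda_basis_empty_left gemeda_basis_empty_right Phi_single Phi_basis_def
        gemeda_mult_single mult.commute)
next
  case nonempty: False
  show ?thesis
  proof (cases "inj_on fst V \<and> inj_on fst W \<and> fst ` V \<inter> fst ` W = {}")
    case True
    with nonempty assms show ?thesis
      by (simp add: Phi_gemeda_basis_compatible)
  next
    case False
    with nonempty show ?thesis
      by (simp add: Phi_gemeda_basis_incompatible)
  qed
qed

lemma mpoly_inject:
  "(mpoly m :: 'k::comm_ring_1 qpoly) = mpoly m' \<longleftrightarrow> m = m'"
  unfolding mpoly_def by (metis lookup_single_eq lookup_single_not_eq zero_neq_one)

lemma mpoly_varm_Z_not_idem:
  "mpoly (varm Z) \<noteq> (mpoly (varm Z) * mpoly (varm Z) :: 'k::comm_ring_1 qpoly)"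
proof -
  have "Poly_Mapping.lookup (varm Z) Z \<noteq> Poly_Mapping.lookup (varm Z + varm Z) Z"
    by (simp add: varm_def lookup_add)
  then show ?thesis
    by (metis mpoly_add mpoly_inject)
qed

lemma Phi_multG:
  assumes "\<And>W. W \<in> Poly_Mapping.keys g1 \<union> Poly_Mapping.keys g2 \<Longrightarrow> finite W"
  shows "pm_cmul (mpoly (varm Z)) (Phi (multG g1 g2)) = multF (Phi g1) (Phi g2 :: (nat, 'k::comm_ring_1) tay)"
proof -
  have "pm_cmul (mpoly (varm Z)) (Phi (multG g1 g2))
      = pm_extend (\<lambda>V. pm_extend (\<lambda>W. pm_cmul (mpoly (varm Z)) (Phi (gemeda_basis ltJ monJ V W))) g2) g1"
    by (simp add: multG_def gemeda_mult_eq_pm_extend Phi_eq_pm_extend pm_extend_pm_extend pm_cmul_pm_extend)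
  also have "\<dots> = pm_extend (\<lambda>V. pm_extend (\<lambda>W. multF (Phi_basis V) (Phi_basis W)) g2) g1"
    using assms by (intro pm_extend_cong) (simp add: multF_def Phi_gemeda_basis)
  also have "\<dots> = multF (Phi g1) (Phi g2)"
    by (simp add: multF_def Phi_eq_pm_extend gemeda_mult_pm_extend)
  finally show ?thesis .
qed

lemma finite_genJ: "finite (genJ n a)"
proof -
  have "genJ n a \<subseteq> (SIGMA i:{1..n}. {1..a i})" by (auto simp: genJ_def)
  then show ?thesis by (rule finite_subset) auto
qed

theorem mainTheorem10:
  fixes n :: nat and a :: "nat \<Rightarrow> nat"
  assumes "n \<ge> 1"
  shows "(\<exists>g1 \<in> elemsG n a. \<exists>g2 \<in> elemsG n a.
            Phi (multG g1 g2) \<noteq> multF (Phi g1) (Phi g2 :: (nat, 'k::field) tay))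
       \<and> (\<forall>g1 \<in> elemsG n a. \<forall>g2 \<in> elemsG n a.
            Poly_Mapping.map (\<lambda>c. mpoly (varm Z) * c) (Phi (multG g1 g2))
              = multF (Phi g1) (Phi g2 :: (nat, 'k::field) tay))"
proof
  let ?one = "Poly_Mapping.single {} 1 :: (nat \<times> nat, 'k) tay"
  have "Phi (multG ?one ?one) \<noteq> multF (Phi ?one) (Phi ?one)"
    by (simp add: multG_def multF_def gemeda_mult_single gemeda_basis_empty_left Phi_single
        Phi_basis_def inj_eq mpoly_varm_Z_not_idem)
  moreover have "?one \<in> elemsG n a"
    by (simp add: elemsG_def)
  ultimately show "\<exists>g1 \<in> elemsG n a. \<exists>g2 \<in> elemsG n a.
      Phi (multG g1 g2) \<noteq> multF (Phi g1) (Phi g2 :: (nat, 'k) tay)"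
    by blast
next
  have "finite W" if "g \<in> elemsG n a" "W \<in> Poly_Mapping.keys g" for g :: "(nat \<times> nat, 'k) tay" and W
    using that finite_subset[OF _ finite_genJ] by (auto simp: elemsG_def)
  then show "\<forall>g1 \<in> elemsG n a. \<forall>g2 \<in> elemsG n a.
      Poly_Mapping.map (\<lambda>c. mpoly (varm Z) * c) (Phi (multG g1 g2))
        = multF (Phi g1) (Phi g2 :: (nat, 'k) tay)"
    using Phi_multG unfolding pm_cmul_def by blast
qed

end
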